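(* Let $\theta_0,\theta_1\in\mathbb{R}$ and put $\theta_\star=-\dfrac{\theta_0+\theta_1}{2}$, $\theta_\star^0=\theta_\star-\theta_0$, $\theta_\star^1=\theta_\star-\theta_1$. Define the $2\times 2$ real matrix $\mathbf{A}=(A_{ij})$ by $$\begin{pmatrix}A_{11}\\ A_{21}\end{pmatrix}=\begin{pmatrix}\cos\theta_0 & -\sin\theta_0\\ \sin\theta_0 & \cos\theta_0\end{pmatrix}\begin{pmatrix}\operatorname{sinc}\theta_\star^0\\ \operatorname{cosc}\theta_\star^0\end{pmatrix},\qquad \begin{pmatrix}A_{12}\\ A_{22}\end{pmatrix}=\begin{pmatrix}\cos\theta_1 & -\sin\theta_1\\ \sin\theta_1 & \cos\theta_1\end{pmatrix}\begin{pmatrix}\operatorname{sinc}\theta_\star^1\\ \operatorname{cosc}\theta_\star^1\end{pmatrix}.$$ Consider the nonlinear system in the unknowns $(s,t,\kappa_0,\kappa_1)\in\mathbb{R}^4$ with $s>0$, $t>0$: $$\begin{cases} \big(\cos\theta_0\operatorname{sinc}(s\kappa_0)-\sin\theta_0\operatorname{cosc}(s\kappa_0)\big)s+\big(\cos\theta_1\operatorname{sinc}(-t\kappa_1)-\sin\theta_1\operatorname{cosc}(-t\kappa_1)\big)t=1,\\ \big(\sin\theta_0\operatorname{sinc}(s\kappa_0)+\cos\theta_0\operatorname{cosc}(s\kappa_0)\big)s+\big(\sin\theta_1\operatorname{sinc}(-t\kappa_1)+\cos\theta_1\operatorname{cosc}(-t\kappa_1)\big)t=0,\\ \theta_0+s\kappa_0=\theta_\star,\\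 \theta_1-t\kappa_1=\theta_\star. \end{cases}$$ Then a quadruple $(s,t,\kappa_0,\kappa_1)$ with $s>0$, $t>0$ solves this nonlinear system if and only if $(s,t)$ solves the linear system $\mathbf{A}\begin{pmatrix}s\\ t\end{pmatrix}=\begin{pmatrix}1\\ 0\end{pmatrix}$ and $\kappa_0=\theta_\star^0/s$, $\kappa_1=-\theta_\star^1/t$.
   Context: The functions $\operatorname{sinc}$ and $\operatorname{cosc}$ are defined for real $x\neq 0$ by $\operatorname{sinc}x=\dfrac{\sin x}{x}$ and $\operatorname{cosc}x=\dfrac{1-\cos x}{x}$, and extended continuously to $x=0$ by $\operatorname{sinc}0=1$, $\operatorname{cosc}0=0$. The nonlinear system is the "standard form" of the biarc $G^1$ Hermite interpolation problem (after roto-translating and scaling so that the endpoints are $(0,0)$ and $(1,0)$): $s,t$ are the normalized lengths of the two circular arcs, $\kappa_0,\kappa_1$ their normalized curvatures, $\theta_0,\theta_1$ the prescribed initial and final tangent angles, and $\theta_\star$ the prescribed tangent angle at the joint point. *)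

theory Defs
  imports Complex_Main
begin

definition sinc :: "real \<Rightarrow> real" where
  "sinc x = (if x = 0 then 1 else sin x / x)"

definition cosc :: "real \<Rightarrow> real" where
  "cosc x = (if x = 0 then 0 else (1 - cos x) / x)"

end

theory Submission
  imports Defs
begin

text \<open>The two angle equations are linear in the curvatures and, since \<open>s, t > 0\<close>, say exactly
  \<open>s * \<kappa>0 = \<theta>s0\<close> and \<open>- t * \<kappa>1 = \<theta>s1\<close>. Once these arguments of \<open>sinc\<close> and \<open>cosc\<close> are
  fixed, the two position equations are literally the linear system with matrix \<open>A\<close>.\<close>

theorem lemma1:
  fixes \<theta>0 \<theta>1 s t \<kappa>0 \<kappa>1 :: real
  defines "\<theta>s \<equiv> - (\<theta>0 + \<theta>1) / 2"
  defines "\<theta>s0 \<equiv> \<theta>s - \<theta>0"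
  defines "\<theta>s1 \<equiv> \<theta>s - \<theta>1"
  defines "A11 \<equiv> cos \<theta>0 * sinc \<theta>s0 - sin \<theta>0 * cosc \<theta>s0"
  defines "A21 \<equiv> sin \<theta>0 * sinc \<theta>s0 + cos \<theta>0 * cosc \<theta>s0"
  defines "A12 \<equiv> cos \<theta>1 * sinc \<theta>s1 - sin \<theta>1 * cosc \<theta>s1"
  defines "A22 \<equiv> sin \<theta>1 * sinc \<theta>s1 + cos \<theta>1 * cosc \<theta>s1"
  assumes "s > 0" and "t > 0"
  shows "((cos \<theta>0 * sinc (s * \<kappa>0) - sin \<theta>0 * cosc (s * \<kappa>0)) * s
            + (cos \<theta>1 * sinc (- t * \<kappa>1) - sin \<theta>1 * cosc (- t * \<kappa>1)) * t = 1 \<and>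
          (sin \<theta>0 * sinc (s * \<kappa>0) + cos \<theta>0 * cosc (s * \<kappa>0)) * s
            + (sin \<theta>1 * sinc (- t * \<kappa>1) + cos \<theta>1 * cosc (- t * \<kappa>1)) * t = 0 \<and>
          \<theta>0 + s * \<kappa>0 = \<theta>s \<and>
          \<theta>1 - t * \<kappa>1 = \<theta>s)
     \<longleftrightarrow>
         (A11 * s + A12 * t = 1 \<and> A21 * s + A22 * t = 0 \<and>
          \<kappa>0 = \<theta>s0 / s \<and> \<kappa>1 = - \<theta>s1 / t)"
proof -
  have angle0: "\<theta>0 + s * \<kappa>0 = \<theta>s \<longleftrightarrow> \<kappa>0 = \<theta>s0 / s"
    using \<open>s > 0\<close> by (auto simp: \<theta>s0_def field_simps)
  have angle1: "\<theta>1 - t * \<kappa>1 = \<theta>s \<longleftrightarrow> \<kappa>1 = - \<theta>s1 / t"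
    using \<open>t > 0\<close> by (auto simp: \<theta>s1_def field_simps)
  have arguments: "s * (\<theta>s0 / s) = \<theta>s0" "- t * (- \<theta>s1 / t) = \<theta>s1"
    using \<open>s > 0\<close> \<open>t > 0\<close> by auto
  have position_eqs_eq_linear:
    "\<kappa>0 = \<theta>s0 / s \<Longrightarrow> \<kappa>1 = - \<theta>s1 / t \<Longrightarrow>
      (cos \<theta>0 * sinc (s * \<kappa>0) - sin \<theta>0 * cosc (s * \<kappa>0)) * s
        + (cos \<theta>1 * sinc (- t * \<kappa>1) - sin \<theta>1 * cosc (- t * \<kappa>1)) * t = A11 * s + A12 * t \<and>
      (sin \<theta>0 * sinc (s * \<kappa>0) + cos \<theta>0 * cosc (s * \<kappa>0)) * s
        + (sin \<theta>1 * sinc (- t * \<kappa>1) + cos \<theta>1 * cosc (- t * \<kappa>1)) * t = A21 * s + A22 * t"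
    unfolding A11_def A12_def A21_def A22_def by (simp only: arguments)
  show ?thesis
    unfolding angle0 angle1 using position_eqs_eq_linear by metis
qed

end
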